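(* Let $\mathcal V\subseteq B(H)$ be an operator system and suppose $p\in\mathcal V$ is a projection in $B(H)$. Then for any $x\in\mathcal V$ with $x=x^*$, we have $pxp\ge0$ in $B(H)$ if and only if for every $\epsilon>0$ there exists $t>0$ such that $x+\epsilon p+t(I-p)\ge 0$. *)

theory Defs
  imports "HOL-Analysis.Analysis" "HOL-Library.Complex_Order"
begin

text \<open>The order on complex numbers is the
library order (0 <= z iff z is a nonnegative real).\<close>

locale chilbert =
  fixes sc :: "complex \<Rightarrow> 'h::ab_group_add \<Rightarrow> 'h"
    and ip :: "'h \<Rightarrow> 'h \<Rightarrow> complex"
  assumes sc_one: "sc 1 x = x"
    and sc_assoc: "sc a (sc b x) = sc (a * b) x"
    and sc_add_left: "sc (a + b) x = sc a x + sc b x"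
    and sc_add_right: "sc a (x + y) = sc a x + sc a y"
    and ip_add_left: "ip (x + y) z = ip x z + ip y z"
    and ip_sc_left: "ip (sc a x) y = a * ip x y"
    and ip_conj_sym: "ip y x = cnj (ip x y)"
    and ip_nonneg: "0 \<le> ip x x"
    and ip_definite: "ip x x = 0 \<Longrightarrow> x = 0"
    and complete: "\<And>f :: nat \<Rightarrow> 'h.
        (\<forall>e>0. \<exists>N. \<forall>m\<ge>N. \<forall>n\<ge>N. sqrt (Re (ip (f m - f n) (f m - f n))) < e)
        \<Longrightarrow> (\<exists>l. (\<lambda>n. sqrt (Re (ip (f n - l) (f n - l)))) \<longlonglongrightarrow> 0)"

definition hnorm :: "('h \<Rightarrow> 'h \<Rightarrow> complex) \<Rightarrow> 'h \<Rightarrow> real" where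
  "hnorm ip x = sqrt (Re (ip x x))"

definition bounded_ops :: "(complex \<Rightarrow> 'h::ab_group_add \<Rightarrow> 'h) \<Rightarrow> ('h \<Rightarrow> 'h \<Rightarrow> complex)
    \<Rightarrow> ('h \<Rightarrow> 'h) set" where
  "bounded_ops sc ip = {T. (\<forall>x y. T (x + y) = T x + T y) \<and> (\<forall>a x. T (sc a x) = sc a (T x))
      \<and> (\<exists>K. \<forall>x. hnorm ip (T x) \<le> K * hnorm ip x)}"

definition is_adjoint :: "('h \<Rightarrow> 'h \<Rightarrow> complex) \<Rightarrow> ('h \<Rightarrow> 'h) \<Rightarrow> ('h \<Rightarrow> 'h) \<Rightarrow> bool" where
  "is_adjoint ip T S \<longleftrightarrow> (\<forall>u v. ip (T u) v = ip u (S v))"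

definition selfadjoint_op :: "('h \<Rightarrow> 'h \<Rightarrow> complex) \<Rightarrow> ('h \<Rightarrow> 'h) \<Rightarrow> bool" where
  "selfadjoint_op ip T \<longleftrightarrow> is_adjoint ip T T"

definition positive_op :: "('h \<Rightarrow> 'h \<Rightarrow> complex) \<Rightarrow> ('h \<Rightarrow> 'h) \<Rightarrow> bool" where
  "positive_op ip T \<longleftrightarrow> (\<forall>u. 0 \<le> ip (T u) u)"

definition projection_op :: "(complex \<Rightarrow> 'h::ab_group_add \<Rightarrow> 'h) \<Rightarrow> ('h \<Rightarrow> 'h \<Rightarrow> complex)
    \<Rightarrow> ('h \<Rightarrow> 'h) \<Rightarrow> bool" where
  "projection_op sc ip p \<longleftrightarrow> p \<in> bounded_ops sc ip \<and> p \<circ> p = p \<and> selfadjoint_op ip p"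

definition operator_system :: "(complex \<Rightarrow> 'h::ab_group_add \<Rightarrow> 'h) \<Rightarrow> ('h \<Rightarrow> 'h \<Rightarrow> complex)
    \<Rightarrow> ('h \<Rightarrow> 'h) set \<Rightarrow> bool" where
  "operator_system sc ip V \<longleftrightarrow> V \<subseteq> bounded_ops sc ip
     \<and> (\<lambda>u. 0) \<in> V
     \<and> (\<forall>S\<in>V. \<forall>T\<in>V. (\<lambda>u. S u + T u) \<in> V)
     \<and> (\<forall>a. \<forall>T\<in>V. (\<lambda>u. sc a (T u)) \<in> V)
     \<and> id \<in> V
     \<and> (\<forall>T\<in>V. \<exists>S\<in>V. is_adjoint ip T S)"

end

theory Submission
  imports Defs
begin

text \<open>Write \<open>u = a + b\<close> with \<open>a = p u\<close> and \<open>b = u - p u\<close>. Since \<open>a \<perp> b\<close>, the quadratic form of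
\<open>x + \<epsilon>p + t(I - p)\<close> at \<open>u\<close> is
\<open>\<langle>x a, a\<rangle> + 2 Re \<langle>x b, a\<rangle> + \<langle>x b, b\<rangle> + \<epsilon>\<parallel>a\<parallel>\<^sup>2 + t\<parallel>b\<parallel>\<^sup>2\<close>.
Taking \<open>u = a\<close> shows \<open>\<langle>x a, a\<rangle> + \<epsilon>\<parallel>a\<parallel>\<^sup>2 \<ge> 0\<close> for all \<open>\<epsilon> > 0\<close>, hence \<open>pxp \<ge> 0\<close>. Conversely,
if \<open>\<langle>x a, a\<rangle> \<ge> 0\<close>, the cross term is absorbed by \<open>\<epsilon>\<parallel>a\<parallel>\<^sup>2/2\<close> and a multiple of \<open>\<parallel>b\<parallel>\<^sup>2\<close>
via \<open>2 Re \<langle>z, y\<rangle> \<ge> -(r\<parallel>y\<parallel>\<^sup>2 + \<parallel>z\<parallel>\<^sup>2/r)\<close>, and \<open>\<parallel>x b\<parallel>\<^sup>2 \<le> K\<parallel>b\<parallel>\<^sup>2\<close> bounds the remaining terms,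
so a large \<open>t\<close> (of order \<open>K/\<epsilon>\<close>) makes the form nonnegative.\<close>

lemma nonneg_if_nonneg_add_eps_mult:
  fixes R M :: real
  assumes "0 \<le> M" and "\<And>e. 0 < e \<Longrightarrow> 0 \<le> R + e * M"
  shows "0 \<le> R"
proof (rule ccontr)
  assume "\<not> 0 \<le> R"
  then have "R + (- R / (M + 1)) * M = R / (M + 1)" "R / (M + 1) < 0"
    using \<open>0 \<le> M\<close> by (simp_all add: field_simps divide_neg_pos)
  moreover have "0 \<le> R + (- R / (M + 1)) * M"
    using \<open>\<not> 0 \<le> R\<close> \<open>0 \<le> M\<close> by (intro assms(2)) (simp add: divide_neg_pos)
  ultimately show False by simp
qed

context chilbert
begin

lemma ip_add_right: "ip z (y + w) = ip z y + ip z w"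
  by (metis ip_conj_sym ip_add_left complex_cnj_add)

lemma ip_sc_right: "ip z (sc a y) = cnj a * ip z y"
  by (metis ip_conj_sym ip_sc_left complex_cnj_mult)

lemma ip_zero_right: "ip z 0 = 0"
  by (metis ip_conj_sym ip_add_left add_0 add_cancel_right_left complex_cnj_zero)

lemma sc_zero: "sc a 0 = 0"
  by (rule additive.zero) (simp add: Modules.additive.intro sc_add_right)

lemma Im_ip_self: "Im (ip y y) = 0"
  using ip_nonneg[of y] by (simp add: less_eq_complex_def)

lemma Re_ip_self_nonneg: "0 \<le> Re (ip y y)"
  using ip_nonneg[of y] by (simp add: less_eq_complex_def)

lemma Re_ip_self_scale_add:
  "Re (ip (sc (of_real r) y + z) (sc (of_real r) y + z))
     = r\<^sup>2 * Re (ip y y) + 2 * r * Re (ip z y) + Re (ip z z)"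
proof -
  have "ip (sc (of_real r) y + z) (sc (of_real r) y + z)
     = of_real r * of_real r * ip y y + of_real r * ip y z + of_real r * ip z y + ip z z"
    by (simp add: ip_add_left ip_add_right ip_sc_left ip_sc_right algebra_simps)
  then show ?thesis
    using ip_conj_sym[of z y] by (simp add: power2_eq_square algebra_simps)
qed

text \<open>The nonnegativity of \<open>\<parallel>r y + z\<parallel>\<^sup>2\<close>, divided by \<open>r\<close>.\<close>

lemma two_Re_ip_lower_bound:
  assumes "0 < r"
  shows "- (r * Re (ip y y) + Re (ip z z) / r) \<le> 2 * Re (ip z y)"
proof -
  have "0 \<le> r\<^sup>2 * Re (ip y y) + 2 * r * Re (ip z y) + Re (ip z z)"
    using Re_ip_self_nonneg Re_ip_self_scale_add by metis
  also have "\<dots> = r * (r * Re (ip y y) + 2 * Re (ip z y) + Re (ip z z) / r)"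
    using assms by (simp add: field_simps power2_eq_square)
  finally have "0 \<le> r * Re (ip y y) + 2 * Re (ip z y) + Re (ip z z) / r"
    using assms by (simp add: zero_le_mult_iff)
  then show ?thesis by linarith
qed

lemma bounded_ops_additive: "T \<in> bounded_ops sc ip \<Longrightarrow> Modules.additive T"
  by (simp add: bounded_ops_def Modules.additive_def)

lemma bounded_ops_Re_ip_bound:
  assumes "T \<in> bounded_ops sc ip"
  shows "\<exists>K\<ge>0. \<forall>y. Re (ip (T y) (T y)) \<le> K * Re (ip y y)"
proof -
  obtain K where K: "\<And>y. hnorm ip (T y) \<le> K * hnorm ip y"
    using assms unfolding bounded_ops_def by blast
  have "Re (ip (T y) (T y)) \<le> K\<^sup>2 * Re (ip y y)" for y
  proof -
    have "(hnorm ip (T y))\<^sup>2 \<le> (K * hnorm ip y)\<^sup>2"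
      using K[of y] by (intro power_mono) (simp_all add: hnorm_def Re_ip_self_nonneg)
    then show ?thesis
      by (simp add: hnorm_def power_mult_distrib Re_ip_self_nonneg)
  qed
  then show ?thesis by (intro exI[of _ "K\<^sup>2"]) simp
qed

lemma selfadjoint_ip_swap:
  "selfadjoint_op ip T \<Longrightarrow> ip (T y) z = cnj (ip (T z) y)"
  by (metis ip_conj_sym selfadjoint_op_def is_adjoint_def)

lemma Im_ip_selfadjoint: "selfadjoint_op ip T \<Longrightarrow> Im (ip (T y) y) = 0"
  using selfadjoint_ip_swap[of T y y] by (metis Reals_cnj_iff complex_is_Real_iff)

lemma projection_idem: "projection_op sc ip p \<Longrightarrow> p (p u) = p u"
  by (metis projection_op_def comp_apply)

lemma projection_complement_eq_0: "projection_op sc ip p \<Longrightarrow> p (u - p u) = 0"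
  using additive.diff[OF bounded_ops_additive, of p u "p u"]
  by (simp add: projection_op_def projection_idem)

lemma ip_projection_complement_eq_0:
  assumes "projection_op sc ip p"
  shows "ip (p u) (v - p v) = 0" and "ip (v - p v) (p u) = 0"
proof -
  show "ip (p u) (v - p v) = 0"
    using assms projection_complement_eq_0[OF assms, of v]
    by (simp add: projection_op_def selfadjoint_op_def is_adjoint_def ip_zero_right)
  then show "ip (v - p v) (p u) = 0"
    by (metis ip_conj_sym complex_cnj_zero)
qed

lemma ip_compression: "projection_op sc ip p \<Longrightarrow> ip ((p \<circ> T \<circ> p) u) u = ip (T (p u)) (p u)"
  by (simp add: projection_op_def selfadjoint_op_def is_adjoint_def)

lemma ip_perturbation_expand:
  fixes u :: 'h
  assumes p: "projection_op sc ip p" and "Modules.additive x" and "selfadjoint_op ip x"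
  defines "a \<equiv> p u" and "b \<equiv> u - p u"
  shows "ip (x u + sc (of_real e) (p u) + sc (of_real t) (u - p u)) u
    = of_real (Re (ip (x a) a) + 2 * Re (ip (x b) a) + Re (ip (x b) b)
        + e * Re (ip a a) + t * Re (ip b b))"
proof -
  have "x u = x a + x b"
    using additive.add[OF \<open>Modules.additive x\<close>, of a b] by (simp add: a_def b_def)
  then have "ip (x u + sc (of_real e) (p u) + sc (of_real t) (u - p u)) u
      = ip (x a + x b + sc (of_real e) a + sc (of_real t) b) (a + b)"
    by (simp add: a_def b_def)
  also have "\<dots> = ip (x a) a + (ip (x b) a + cnj (ip (x b) a)) + ip (x b) b
        + of_real e * ip a a + of_real t * ip b b"
    using ip_projection_complement_eq_0[OF p, of u u, folded a_def b_def]
      selfadjoint_ip_swap[OF \<open>selfadjoint_op ip x\<close>, of a b]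
    by (simp add: ip_add_left ip_add_right ip_sc_left algebra_simps)
  finally show ?thesis
    using Im_ip_selfadjoint[OF \<open>selfadjoint_op ip x\<close>]
    by (simp add: complex_eq_iff Im_ip_self)
qed

lemma perturbation_positive_if_compression_positive:
  assumes p: "projection_op sc ip p"
    and x: "x \<in> bounded_ops sc ip" "selfadjoint_op ip x"
    and pxp: "positive_op ip (p \<circ> x \<circ> p)" and "0 < \<epsilon>"
  shows "\<exists>t>0. positive_op ip (\<lambda>u. x u + sc (of_real \<epsilon>) (p u) + sc (of_real t) (u - p u))"
proof -
  obtain K where "0 \<le> K" and K: "\<And>y. Re (ip (x y) (x y)) \<le> K * Re (ip y y)"
    using bounded_ops_Re_ip_bound[OF x(1)] by blast
  \<comment> \<open>\<open>2K/\<epsilon>\<close> absorbs the cross term, \<open>(1 + K)/2\<close> the term \<open>\<langle>x b, b\<rangle>\<close>, and \<open>1\<close> keeps \<open>t > 0\<close>\<close>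
  define t where "t = 2 * K / \<epsilon> + (1 + K) / 2 + 1"
  have "0 < t"
    using \<open>0 \<le> K\<close> \<open>0 < \<epsilon>\<close> by (simp add: t_def add_nonneg_pos)
  moreover have "positive_op ip (\<lambda>u. x u + sc (of_real \<epsilon>) (p u) + sc (of_real t) (u - p u))"
    unfolding positive_op_def
  proof
    fix u
    define a where "a = p u"
    define b where "b = u - p u"
    have "0 \<le> Re (ip (x a) a)"
      using pxp ip_compression[OF p, of x u] unfolding positive_op_def a_def
      by (metis less_eq_complex_def zero_complex.sel(1))
    moreover have "- (\<epsilon> * Re (ip a a) / 2 + Re (ip (x b) (x b)) / (\<epsilon> / 2))
        \<le> 2 * Re (ip (x b) a)"
      using two_Re_ip_lower_bound[of "\<epsilon> / 2" a "x b"] \<open>0 < \<epsilon>\<close> by simp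
    moreover have "- (Re (ip b b) + Re (ip (x b) (x b))) \<le> 2 * Re (ip (x b) b)"
      using two_Re_ip_lower_bound[of 1 b "x b"] by simp
    moreover have "Re (ip (x b) (x b)) / (\<epsilon> / 2) \<le> K * Re (ip b b) / (\<epsilon> / 2)"
      using K[of b] \<open>0 < \<epsilon>\<close> by (simp add: divide_right_mono)
    moreover have "t * Re (ip b b)
        = K * Re (ip b b) / (\<epsilon> / 2) + K * Re (ip b b) / 2 + Re (ip b b) / 2 + Re (ip b b)"
      using \<open>0 < \<epsilon>\<close> by (simp add: t_def field_simps)
    moreover have "0 \<le> \<epsilon> * Re (ip a a)" "0 \<le> Re (ip b b)"
      using \<open>0 < \<epsilon>\<close> Re_ip_self_nonneg by simp_all
    ultimately have "0 \<le> Re (ip (x a) a) + 2 * Re (ip (x b) a) + Re (ip (x b) b)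
        + \<epsilon> * Re (ip a a) + t * Re (ip b b)"
      using K[of b] by linarith
    then show "0 \<le> ip (x u + sc (of_real \<epsilon>) (p u) + sc (of_real t) (u - p u)) u"
      using ip_perturbation_expand[OF p bounded_ops_additive[OF x(1)] x(2), of u \<epsilon> t]
      by (simp add: a_def b_def less_eq_complex_def)
  qed
  ultimately show ?thesis by blast
qed

lemma compression_positive_if_perturbations_positive:
  assumes p: "projection_op sc ip p"
    and pos: "\<And>\<epsilon>. 0 < \<epsilon> \<Longrightarrow>
      \<exists>t. positive_op ip (\<lambda>u. x u + sc (of_real \<epsilon>) (p u) + sc (of_real t) (u - p u))"
  shows "positive_op ip (p \<circ> x \<circ> p)"
  unfolding positive_op_def
proof
  fix v
  define w where "w = p v"
  have pw: "p w = w" by (simp add: w_def projection_idem[OF p])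
  have perturbed: "0 \<le> ip (x w) w + of_real \<epsilon> * ip w w" if "0 < \<epsilon>" for \<epsilon>
  proof -
    obtain t where "positive_op ip (\<lambda>u. x u + sc (of_real \<epsilon>) (p u) + sc (of_real t) (u - p u))"
      using pos \<open>0 < \<epsilon>\<close> by blast
    then have "0 \<le> ip (x w + sc (of_real \<epsilon>) (p w) + sc (of_real t) (w - p w)) w"
      unfolding positive_op_def by blast
    then show ?thesis by (simp add: pw sc_zero ip_add_left ip_sc_left)
  qed
  have "Im (ip (x w) w) = 0"
    using perturbed[of 1] Im_ip_self by (simp add: less_eq_complex_def)
  moreover have "0 \<le> Re (ip (x w) w)"
  proof (rule nonneg_if_nonneg_add_eps_mult[OF Re_ip_self_nonneg])
    show "0 \<le> Re (ip (x w) w) + \<epsilon> * Re (ip w w)" if "0 < \<epsilon>" for \<epsilon>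
      using perturbed[OF that] by (simp add: less_eq_complex_def)
  qed
  ultimately have "0 \<le> ip (x w) w"
    by (simp add: less_eq_complex_def)
  then show "0 \<le> ip ((p \<circ> x \<circ> p) v) v"
    by (simp only: ip_compression[OF p] w_def)
qed

end

theorem lemma4p5:
  fixes sc :: "complex \<Rightarrow> 'h::ab_group_add \<Rightarrow> 'h"
    and ip :: "'h \<Rightarrow> 'h \<Rightarrow> complex"
    and V :: "('h \<Rightarrow> 'h) set"
    and p x :: "'h \<Rightarrow> 'h"
  assumes "chilbert sc ip"
    and "operator_system sc ip V"
    and "p \<in> V" and "projection_op sc ip p"
    and "x \<in> V" and "selfadjoint_op ip x"
  shows "positive_op ip (p \<circ> x \<circ> p) \<longleftrightarrow>
    (\<forall>\<epsilon>::real. \<epsilon> > 0 \<longrightarrow> (\<exists>t::real. t > 0 \<and>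
       positive_op ip (\<lambda>u. x u + sc (complex_of_real \<epsilon>) (p u) + sc (complex_of_real t) (u - p u))))"
proof -
  interpret chilbert sc ip by fact
  have "x \<in> bounded_ops sc ip"
    using assms(2,5) by (auto simp: operator_system_def)
  then show ?thesis
    using perturbation_positive_if_compression_positive[OF assms(4) _ assms(6)]
      compression_positive_if_perturbations_positive[OF assms(4), of x]
    by blast
qed

end
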